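(* For fixed $\vec a\in\mathcal M$, the multiplication $\circ$ on $\mathcal H\times\mathcal H$ descends to a well-defined commutative associative multiplication on the cotangent space $T^*_{\vec a}\mathcal M=(\mathcal H\times\mathcal H)/\ker\eta$; equivalently, if $\eta(\vec\omega_2)=0$ then $\eta(\vec\omega_1\circ\vec\omega_2)=0$ for every $\vec\omega_1\in\mathcal H\times\mathcal H$.
   Context: Fix $m\ge1$, positive integers $n_0,\dots,n_m$, nonzero integers $d_1,\dots,d_m$; $D_1,\dots,D_m\subset\mathbb C$ pairwise disjoint closed disks, $\gamma_i=\partial D_i$ positively oriented, $\mathbf D^{int}=\bigcup(D_i\setminus\gamma_i)$, $\mathbf D^{ext}=\mathbb P^1\setminus\bigcup D_i$; $\mathcal H$ = germs of functions holomorphic near $\bigcup\gamma_i$; $f=f_++f_-$, $f_+(z)=\frac1{2\pi\mathrm i}\sum_s\oint_{\gamma_s}\frac{f(p)}{p-z}dp$ ($z$ inside), $f_-=-(\text{same})$ ($z$ outside), $f_-(\infty)=0$. $\mathcal M$: pairs $\vec a=(a,\hat a)\in\mathcal H\times\mathcal H$, $a$ meromorphic on $\mathbf D^{ext}$, only pole $\infty$, $a=z^{n_0}+a_{n_0-2}z^{n_0-2}+\cdots$; $\hat a$ meromorphic on $\mathbf D^{int}$, only poles $\varphi_j\in D_j\setminus\gamma_j$, $\hat a=\hat a_{j,-n_j}(z-\varphi_j)^{-n_j}+\cdots$, $\hat a_{j,-n_j}\ne0$; $a-\hat a=w_j^{d_j}$ on $\gamma_j$, $w_j$ holomorphic near $\gamma_j$,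 $w_j'\ne0$, $w_j(\gamma_j)$ winding once about $0$. Tangent vectors $X\leftrightarrow(\partial_Xa,\partial_X\hat a)$; $'=\partial_z$. $\eta:\mathcal H\times\mathcal H\to T_{\vec a}\mathcal M$, $\eta(\omega,\hat\omega)=(a'(\omega+\hat\omega)_--(\omega a'+\hat\omega\hat a')_-,-\hat a'(\omega+\hat\omega)_++(\omega a'+\hat\omega\hat a')_+)$. Multiplication: $(\omega_1,\hat\omega_1)\circ(\omega_2,\hat\omega_2)=(\omega_2(\omega_1a')_+-\omega_1(\omega_2a')_--\omega_2(\hat\omega_1\hat a')_--\omega_1(\hat\omega_2\hat a')_-,\ \hat\omega_2(\hat\omega_1\hat a')_+-\hat\omega_1(\hat\omega_2\hat a')_-+\hat\omega_1(\omega_2a')_++\hat\omega_2(\omega_1a')_+)$. *)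

theory Defs
  imports "HOL-Complex_Analysis.Complex_Analysis"
begin

definition circles :: "(nat \<Rightarrow> complex) \<Rightarrow> (nat \<Rightarrow> real) \<Rightarrow> nat \<Rightarrow> complex set" where
  "circles c r m = (\<Union>i\<in>{1..m}. sphere (c i) (r i))"

definition disks_int :: "(nat \<Rightarrow> complex) \<Rightarrow> (nat \<Rightarrow> real) \<Rightarrow> nat \<Rightarrow> complex set" where
  "disks_int c r m = (\<Union>i\<in>{1..m}. ball (c i) (r i))"

definition disks :: "(nat \<Rightarrow> complex) \<Rightarrow> (nat \<Rightarrow> real) \<Rightarrow> nat \<Rightarrow> complex set" where
  "disks c r m = (\<Union>i\<in>{1..m}. cball (c i) (r i))"

text \<open>Germs of holomorphic functions near the union of the circles (the space H).\<close>
definition holo_near :: "(nat \<Rightarrow> complex) \<Rightarrow> (nat \<Rightarrow> real) \<Rightarrow> nat \<Rightarrow> (complex \<Rightarrow> complex) \<Rightarrow> bool" where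
  "holo_near c r m f \<longleftrightarrow> (\<exists>U. open U \<and> circles c r m \<subseteq> U \<and> f holomorphic_on U)"

definition cauchy_int :: "(nat \<Rightarrow> complex) \<Rightarrow> (nat \<Rightarrow> real) \<Rightarrow> nat \<Rightarrow> (complex \<Rightarrow> complex) \<Rightarrow> complex \<Rightarrow> complex" where
  "cauchy_int c r m f z = (1 / (2 * of_real pi * \<i>)) *
     (\<Sum>s\<in>{1..m}. contour_integral (circlepath (c s) (r s)) (\<lambda>p. f p / (p - z)))"

text \<open>g is (a representative of the germ of) f_+ : the holomorphic continuation, to a
  neighbourhood of the circles, of the Cauchy integral defined for z inside the disks.\<close>
definition is_plus_part :: "(nat \<Rightarrow> complex) \<Rightarrow> (nat \<Rightarrow> real) \<Rightarrow> nat \<Rightarrow> (complex \<Rightarrow> complex) \<Rightarrow> (complex \<Rightarrow> complex) \<Rightarrow> bool" where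
  "is_plus_part c r m f g \<longleftrightarrow> (\<exists>V. open V \<and> circles c r m \<subseteq> V \<and>
      g holomorphic_on (V \<union> disks_int c r m) \<and>
      (\<forall>z\<in>disks_int c r m. g z = cauchy_int c r m f z))"

text \<open>g is f_- : continuation of minus the Cauchy integral defined for z outside the disks.\<close>
definition is_minus_part :: "(nat \<Rightarrow> complex) \<Rightarrow> (nat \<Rightarrow> real) \<Rightarrow> nat \<Rightarrow> (complex \<Rightarrow> complex) \<Rightarrow> (complex \<Rightarrow> complex) \<Rightarrow> bool" where
  "is_minus_part c r m f g \<longleftrightarrow> (\<exists>V. open V \<and> circles c r m \<subseteq> V \<and>
      g holomorphic_on (V \<union> (- disks c r m)) \<and>
      (\<forall>z\<in>- disks c r m. g z = - cauchy_int c r m f z))"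

definition pplus :: "(nat \<Rightarrow> complex) \<Rightarrow> (nat \<Rightarrow> real) \<Rightarrow> nat \<Rightarrow> (complex \<Rightarrow> complex) \<Rightarrow> complex \<Rightarrow> complex" where
  "pplus c r m f = (SOME g. is_plus_part c r m f g)"

definition pminus :: "(nat \<Rightarrow> complex) \<Rightarrow> (nat \<Rightarrow> real) \<Rightarrow> nat \<Rightarrow> (complex \<Rightarrow> complex) \<Rightarrow> complex \<Rightarrow> complex" where
  "pminus c r m f = (SOME g. is_minus_part c r m f g)"

type_synonym cpair = "(complex \<Rightarrow> complex) \<times> (complex \<Rightarrow> complex)"

definition eta :: "(nat \<Rightarrow> complex) \<Rightarrow> (nat \<Rightarrow> real) \<Rightarrow> nat \<Rightarrow> (complex \<Rightarrow> complex) \<Rightarrow> (complex \<Rightarrow> complex) \<Rightarrow> cpair \<Rightarrow> cpair" where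
  "eta c r m a ah w =
     (let om = fst w; omh = snd w;
          s = (\<lambda>z. om z + omh z);
          t = (\<lambda>z. om z * deriv a z + omh z * deriv ah z)
      in (\<lambda>z. deriv a z * pminus c r m s z - pminus c r m t z,
          \<lambda>z. - deriv ah z * pplus c r m s z + pplus c r m t z))"

definition mult :: "(nat \<Rightarrow> complex) \<Rightarrow> (nat \<Rightarrow> real) \<Rightarrow> nat \<Rightarrow> (complex \<Rightarrow> complex) \<Rightarrow> (complex \<Rightarrow> complex) \<Rightarrow> cpair \<Rightarrow> cpair \<Rightarrow> cpair" where
  "mult c r m a ah w1 w2 =
     (let o1 = fst w1; oh1 = snd w1; o2 = fst w2; oh2 = snd w2;
          P = pplus c r m; N = pminus c r m;
          A1 = (\<lambda>z. o1 z * deriv a z); A2 = (\<lambda>z. o2 z * deriv a z);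
          B1 = (\<lambda>z. oh1 z * deriv ah z); B2 = (\<lambda>z. oh2 z * deriv ah z)
      in (\<lambda>z. o2 z * P A1 z - o1 z * N A2 z - o2 z * N B1 z - o1 z * N B2 z,
          \<lambda>z. oh2 z * P B1 z - oh1 z * N B2 z + oh1 z * P A2 z + oh2 z * P A1 z))"

definition germ_eq :: "(nat \<Rightarrow> complex) \<Rightarrow> (nat \<Rightarrow> real) \<Rightarrow> nat \<Rightarrow> cpair \<Rightarrow> cpair \<Rightarrow> bool" where
  "germ_eq c r m p q \<longleftrightarrow> (\<exists>U. open U \<and> circles c r m \<subseteq> U \<and>
      (\<forall>z\<in>U. fst p z = fst q z \<and> snd p z = snd q z))"

definition in_M :: "(nat \<Rightarrow> complex) \<Rightarrow> (nat \<Rightarrow> real) \<Rightarrow> nat \<Rightarrow> (nat \<Rightarrow> nat) \<Rightarrow> (nat \<Rightarrow> int) \<Rightarrow>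
    (nat \<Rightarrow> complex) \<Rightarrow> (complex \<Rightarrow> complex) \<Rightarrow> (complex \<Rightarrow> complex) \<Rightarrow> bool" where
  "in_M c r m n d \<phi> a ah \<longleftrightarrow>
     \<comment> \<open>a holomorphic near the circles and on the exterior (only pole at infinity)\<close>
     (\<exists>U. open U \<and> - disks_int c r m \<subseteq> U \<and> a holomorphic_on U) \<and>
     \<comment> \<open>a = z^n0 + a_{n0-2} z^{n0-2} + ... at infinity, i.e. (a - z^n0) = O(z^(n0-2))\<close>
     (\<exists>C R. \<forall>z. R \<le> norm z \<longrightarrow> norm ((a z - z ^ n 0) * z ^ 2) \<le> C * norm z ^ n 0) \<and>
     \<comment> \<open>ah holomorphic near the circles and on the disk interiors except the poles phi_j\<close>
     (\<exists>U. open U \<and> disks c r m \<subseteq> U \<and> ah holomorphic_on (U - \<phi> ` {1..m})) \<and>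
     (\<forall>j\<in>{1..m}. \<phi> j \<in> ball (c j) (r j) \<and>
        (\<exists>coef. coef \<noteq> 0 \<and> ((\<lambda>z. (z - \<phi> j) ^ n j * ah z) \<longlongrightarrow> coef) (at (\<phi> j)))) \<and>
     \<comment> \<open>a - ah = w_j^{d_j} near gamma_j\<close>
     (\<forall>j\<in>{1..m}. \<exists>U w. open U \<and> sphere (c j) (r j) \<subseteq> U \<and> w holomorphic_on U \<and>
        (\<forall>z\<in>U. w z \<noteq> 0 \<and> deriv w z \<noteq> 0 \<and> a z - ah z = w z powi d j) \<and>
        winding_number (w \<circ> circlepath (c j) (r j)) 0 = 1)"

end

theory Submission
  imports Defs
begin

text \<open>
  Every germ \<open>f\<close> along the circles splits uniquely as \<open>f = f\<^sub>+ + f\<^sub>-\<close> with \<open>f\<^sub>+\<close> analytic on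
  the closed disks and \<open>f\<^sub>-\<close> analytic off the open disks and vanishing at infinity: the parts are
  Cauchy integrals over slightly shrunk or enlarged circles, and uniqueness is Liouville's theorem.
  Hence any identity \<open>f = A + B\<close> of germs with \<open>A\<close>, \<open>B\<close> of these two kinds identifies
  \<open>f\<^sub>+ = A\<close> and \<open>f\<^sub>- = B\<close>. For pairs \<open>w = (\<omega>, \<omega>')\<close> put \<open>t(w) = \<omega> a' + \<omega>' ah'\<close> and
  \<open>L(w) = (\<omega> a')\<^sub>+ - (\<omega>' ah')\<^sub>-\<close>. Such identifications give, for \<open>w\<^sub>i = (\<omega>\<^sub>i, \<omega>'\<^sub>i)\<close>,
  \<open>w\<^sub>1 \<circ> w\<^sub>2 = (L(w\<^sub>1) \<omega>\<^sub>2 - \<omega>\<^sub>1 t(w\<^sub>2)\<^sub>-, L(w\<^sub>1) \<omega>'\<^sub>2 + \<omega>'\<^sub>1 t(w\<^sub>2)\<^sub>+)\<close>,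
  \<open>t(w\<^sub>1 \<circ> w\<^sub>2)\<^sub>\<plusminus> = \<plusminus>t(w\<^sub>1)\<^sub>\<plusminus> t(w\<^sub>2)\<^sub>\<plusminus>\<close> and \<open>L(w\<^sub>1 \<circ> w\<^sub>2) = L(w\<^sub>1) L(w\<^sub>2)\<close>.
  So \<open>\<circ>\<close> is commutative and associative already on germs, and if \<open>\<eta>(w\<^sub>2) = 0\<close>, i.e.
  \<open>t(w\<^sub>2)\<^sub>- = a' (\<omega>\<^sub>2 + \<omega>'\<^sub>2)\<^sub>-\<close> and \<open>t(w\<^sub>2)\<^sub>+ = ah' (\<omega>\<^sub>2 + \<omega>'\<^sub>2)\<^sub>+\<close>, the same
  identities give \<open>\<eta>(w\<^sub>1 \<circ> w\<^sub>2) = 0\<close>.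
\<close>

section \<open>Cauchy integrals over circles\<close>

lemma has_contour_integral_circlepath_cauchy:
  assumes "continuous_on (sphere c \<rho>) f" "z \<notin> sphere c \<rho>" "0 \<le> \<rho>"
  shows "((\<lambda>p. f p / (p - z)) has_contour_integral
           contour_integral (circlepath c \<rho>) (\<lambda>p. f p / (p - z))) (circlepath c \<rho>)"
proof -
  have "continuous_on (path_image (circlepath c \<rho>)) (\<lambda>p. f p / (p - z))"
    using assms by (auto intro!: continuous_intros)
  then show ?thesis
    by (auto intro!: has_contour_integral_integral contour_integrable_continuous_circlepath)
qed

lemma holomorphic_on_cauchy_integral_circlepath:
  assumes "continuous_on (sphere c \<rho>) f" "0 < \<rho>"
  shows "(\<lambda>z. contour_integral (circlepath c \<rho>) (\<lambda>p. f p / (p - z))) holomorphic_on - sphere c \<rho>"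
  unfolding holomorphic_on_open[OF open_Compl[OF closed_sphere]]
proof
  fix w assume w: "w \<in> - sphere c \<rho>"
  have "((\<lambda>z. contour_integral (circlepath c \<rho>) (\<lambda>p. f p / (p - z))) has_field_derivative
      (of_nat 1 * contour_integral (circlepath c \<rho>) (\<lambda>p. f p / (p - w) ^ Suc 1))) (at w)"
  proof (rule Cauchy_next_derivative(2)[where S = UNIV and B = "2 * pi * \<rho>"])
    show "norm (vector_derivative (circlepath c \<rho>) (at t)) \<le> 2 * pi * \<rho>" for t
      using assms by (simp add: vector_derivative_circlepath norm_mult)
    show "((\<lambda>p. f p / (p - z) ^ 1) has_contour_integral
            contour_integral (circlepath c \<rho>) (\<lambda>p. f p / (p - z))) (circlepath c \<rho>)"
      if "z \<in> UNIV - path_image (circlepath c \<rho>)" for z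
      using has_contour_integral_circlepath_cauchy[OF assms(1), of z] that assms(2) by simp
  qed (use w assms in auto)
  then show "\<exists>f'. ((\<lambda>z. contour_integral (circlepath c \<rho>) (\<lambda>p. f p / (p - z)))
                      has_field_derivative f') (at w)" by blast
qed

lemma contour_integral_circlepath_annulus_eq:
  assumes "open S" "f holomorphic_on S" "0 < \<rho>" "\<rho> \<le> R"
    and "{w. \<rho> \<le> dist c w \<and> dist c w \<le> R} \<subseteq> S"
  shows "contour_integral (circlepath c \<rho>) f = contour_integral (circlepath c R) f"
proof (rule Cauchy_theorem_homotopic_loops[OF _ assms(1,2)])
  show "homotopic_loops S (circlepath c \<rho>) (circlepath c R)"
  proof (rule homotopic_loops_linear)
    fix t :: real
    show "closed_segment (circlepath c \<rho> t) (circlepath c R t) \<subseteq> S"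
    proof
      fix x assume "x \<in> closed_segment (circlepath c \<rho> t) (circlepath c R t)"
      then obtain u where u: "0 \<le> u" "u \<le> 1"
        and x: "x = (1 - u) *\<^sub>R circlepath c \<rho> t + u *\<^sub>R circlepath c R t"
        unfolding closed_segment_def by auto
      define k where "k = (1 - u) * \<rho> + u * R"
      have "\<rho> \<le> k" "k \<le> R"
        using mult_left_mono[OF assms(4) u(1)] mult_left_mono[OF assms(4), of "1 - u"] u
        by (simp_all add: k_def algebra_simps)
      moreover have "x - c = of_real k * exp (2 * of_real pi * \<i> * t)"
        unfolding x circlepath_def part_circlepath_def linepath_def scaleR_conv_of_real k_def
        by (simp add: algebra_simps)
      then have "norm (x - c) = k"
        using \<open>\<rho> \<le> k\<close> assms(3) by (simp add: norm_mult)
      then have "dist c x = k"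
        by (metis dist_commute dist_norm)
      ultimately show "x \<in> S" using assms(5) by auto
    qed
  qed auto
qed auto

lemma cauchy_integral_circlepath_radius_eq:
  assumes "open U" "f holomorphic_on U" "0 < \<rho>" "\<rho> \<le> R"
    and "{w. \<rho> \<le> dist c w \<and> dist c w \<le> R} \<subseteq> U"
    and "z \<notin> {w. \<rho> \<le> dist c w \<and> dist c w \<le> R}"
  shows "contour_integral (circlepath c \<rho>) (\<lambda>p. f p / (p - z))
       = contour_integral (circlepath c R) (\<lambda>p. f p / (p - z))"
proof (rule contour_integral_circlepath_annulus_eq[where S = "U - {z}"])
  show "(\<lambda>p. f p / (p - z)) holomorphic_on U - {z}"
    using assms(2) by (auto intro!: holomorphic_intros elim: holomorphic_on_subset)
qed (use assms in auto)

lemma cauchy_integral_circlepath_jump: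
  assumes "open U" "f holomorphic_on U" "0 < \<rho>" "\<rho> \<le> R"
    and ann: "{w. \<rho> \<le> dist c w \<and> dist c w \<le> R} \<subseteq> U"
    and z: "\<rho> < dist c z" "dist c z < R"
  shows "contour_integral (circlepath c R) (\<lambda>p. f p / (p - z))
       - contour_integral (circlepath c \<rho>) (\<lambda>p. f p / (p - z)) = 2 * of_real pi * \<i> * f z"
proof -
  define g where "g p = (if p = z then deriv f z else (f p - f z) / (p - z))" for p
  have "g holomorphic_on U"
    unfolding g_def using pole_lemma_open assms(1,2) by blast
  then have eq: "contour_integral (circlepath c \<rho>) g = contour_integral (circlepath c R) g"
    by (rule contour_integral_circlepath_annulus_eq[OF assms(1) _ assms(3,4) ann])
  have fc: "continuous_on (sphere c s) f" if "s \<in> {\<rho>, R}" for s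
    using that ann assms(3,4) holomorphic_on_imp_continuous_on[OF assms(2)]
    by (auto elim!: continuous_on_subset)
  have zs: "z \<notin> sphere c s" if "s \<in> {\<rho>, R}" for s
    using that z by auto
  have jR: "((\<lambda>p. 1 / (p - z)) has_contour_integral 2 * of_real pi * \<i> * 1) (circlepath c R)"
    using Cauchy_integral_circlepath[of c R "\<lambda>_. 1" z] z by (simp add: dist_norm norm_minus_commute)
  have j\<rho>: "((\<lambda>p. 1 / (p - z)) has_contour_integral 0) (circlepath c \<rho>)"
    by (rule Cauchy_theorem_convex_simple[where S = "cball c \<rho>"])
       (use z assms(3) in \<open>auto intro!: holomorphic_intros\<close>)
  have g_int: "(g has_contour_integral
      contour_integral (circlepath c s) (\<lambda>p. f p / (p - z)) - f z * J) (circlepath c s)"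
    if "s \<in> {\<rho>, R}" "((\<lambda>p. 1 / (p - z)) has_contour_integral J) (circlepath c s)" for s J
  proof (rule has_contour_integral_eq[OF has_contour_integral_diff
        [OF has_contour_integral_circlepath_cauchy[OF fc[OF that(1)] zs[OF that(1)]]
            has_contour_integral_lmul[OF that(2)]]])
    show "0 \<le> s" using that(1) assms(3,4) by auto
    show "f p / (p - z) - f z * (1 / (p - z)) = g p" if "p \<in> path_image (circlepath c s)" for p
      using that zs[OF \<open>s \<in> {\<rho>, R}\<close>] assms(3,4) \<open>s \<in> {\<rho>, R}\<close>
      by (auto simp: g_def diff_divide_distrib)
  qed
  show ?thesis
    using eq contour_integral_unique[OF g_int[OF _ jR]] contour_integral_unique[OF g_int[OF _ j\<rho>]]
    by (simp add: algebra_simps)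
qed

lemma norm_cauchy_integral_circlepath_far_le:
  assumes "continuous_on (sphere c \<rho>) f" "0 < \<rho>" "0 < B" "\<And>x. x \<in> sphere c \<rho> \<Longrightarrow> norm (f x) \<le> B"
    and z: "2 * (norm c + \<rho>) + 1 \<le> norm z"
  shows "norm (contour_integral (circlepath c \<rho>) (\<lambda>p. f p / (p - z)))
           \<le> 2 * B * norm (inverse z) * (2 * pi * \<rho>)"
proof -
  have nz: "norm z > 0"
    using z assms(2) norm_ge_zero[of c] by (smt (verit))
  have near_circle: "norm p \<le> norm c + \<rho>" if "p \<in> sphere c \<rho>" for p
    using that norm_triangle_ineq[of "p - c" c] by (simp add: dist_norm norm_minus_commute)
  then have zs: "z \<notin> sphere c \<rho>"
    using z assms(2) norm_ge_zero[of c] by fastforce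
  have "norm (f p / (p - z)) \<le> 2 * B * norm (inverse z)" if p: "p \<in> sphere c \<rho>" for p
  proof -
    have "norm z / 2 \<le> norm (p - z)"
      using near_circle[OF p] norm_triangle_ineq2[of z p] z by (simp add: norm_minus_commute)
    then have "norm (f p) / norm (p - z) \<le> B / (norm z / 2)"
      using assms(3,4) p nz by (intro frac_le) auto
    then show ?thesis
      using nz by (simp add: norm_divide norm_inverse field_simps)
  qed
  then show ?thesis
    by (intro has_contour_integral_bound_circlepath
          [OF has_contour_integral_circlepath_cauchy[OF assms(1) zs]])
       (use assms(2,3) in \<open>auto simp: dist_norm norm_minus_commute\<close>)
qed

lemma cauchy_integral_circlepath_tendsto_0:
  assumes "continuous_on (sphere c \<rho>) f" "0 < \<rho>"
  shows "((\<lambda>z. contour_integral (circlepath c \<rho>) (\<lambda>p. f p / (p - z))) \<longlongrightarrow> 0) at_infinity"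
proof -
  obtain B where B: "0 < B" "\<And>x. x \<in> sphere c \<rho> \<Longrightarrow> norm (f x) \<le> B"
    using compact_imp_bounded[OF compact_continuous_image[OF assms(1) compact_sphere]] bounded_pos
    by (metis image_eqI)
  have "eventually (\<lambda>z. norm (contour_integral (circlepath c \<rho>) (\<lambda>p. f p / (p - z)))
                          \<le> 2 * B * (2 * pi * \<rho>) * norm (inverse z)) at_infinity"
    unfolding eventually_at_infinity
    using norm_cauchy_integral_circlepath_far_le[OF assms B] by (auto simp: algebra_simps)
  moreover have "((\<lambda>z::complex. 2 * B * (2 * pi * \<rho>) * norm (inverse z)) \<longlongrightarrow> 0) at_infinity"
    by (intro tendsto_mult_right_zero tendsto_norm_zero tendsto_inverse_0)
  ultimately show ?thesis by (rule Lim_null_comparison)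
qed

section \<open>Germs along a set\<close>

text \<open>The filter of neighbourhoods of a set; eventual equality in \<open>near \<Gamma>\<close> is equality of germs along \<open>\<Gamma>\<close>.\<close>
definition near :: "'a::topological_space set \<Rightarrow> 'a filter" where
  "near S = (INF U\<in>{U. open U \<and> S \<subseteq> U}. principal U)"

lemma eventually_near: "eventually P (near S) \<longleftrightarrow> (\<exists>U. open U \<and> S \<subseteq> U \<and> (\<forall>z\<in>U. P z))"
proof -
  have "eventually P (near S) \<longleftrightarrow> (\<exists>U\<in>{U. open U \<and> S \<subseteq> U}. eventually P (principal U))"
    unfolding near_def
  proof (rule eventually_INF_base)
    fix U V assume "U \<in> {U. open U \<and> S \<subseteq> U}" "V \<in> {U. open U \<and> S \<subseteq> U}"
    then show "\<exists>W\<in>{U. open U \<and> S \<subseteq> U}. principal W \<le> inf (principal U) (principal V)"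
      by (intro bexI[of _ "U \<inter> V"]) auto
  qed auto
  then show ?thesis by (auto simp: eventually_principal)
qed

lemma eventually_nearI:
  assumes "\<And>x. x \<in> S \<Longrightarrow> \<exists>e>0. \<forall>y\<in>ball x e. P y"
  shows "eventually P (near S)"
  unfolding eventually_near
proof (intro exI conjI)
  show "S \<subseteq> interior {y. P y}"
    using assms by (force simp: mem_interior)
qed (use interior_subset in auto)

lemma germ_eq_iff_eventually:
  "germ_eq c r m p q \<longleftrightarrow> eventually (\<lambda>z. fst p z = fst q z \<and> snd p z = snd q z) (near (circles c r m))"
  by (simp add: germ_eq_def eventually_near)

lemma holo_near_iff_analytic_on: "holo_near c r m f \<longleftrightarrow> f analytic_on circles c r m"
  by (simp add: holo_near_def analytic_on_holomorphic)

lemma eventually_eq_near_if_eq_on_open: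
  assumes "f analytic_on (S \<union> X)" "g analytic_on (S \<union> X)" "open X" "S \<subseteq> closure X"
    and eq: "\<And>z. z \<in> X \<Longrightarrow> f z = g z"
  shows "eventually (\<lambda>z. f z = g z) (near S)"
proof (rule eventually_nearI)
  obtain Wf Wg where W: "open Wf" "S \<union> X \<subseteq> Wf" "f holomorphic_on Wf"
    "open Wg" "S \<union> X \<subseteq> Wg" "g holomorphic_on Wg"
    using assms(1,2) by (meson analytic_on_holomorphic)
  fix x assume "x \<in> S"
  then have "x \<in> Wf \<inter> Wg" using W(2,5) by blast
  then obtain e where e: "0 < e" "ball x e \<subseteq> Wf \<inter> Wg"
    using open_contains_ball open_Int[OF W(1,4)] by blast
  have "x \<in> ball x e \<inter> closure X"
    using \<open>x \<in> S\<close> assms(4) e(1) by auto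
  then have "ball x e \<inter> X \<noteq> {}"
    using open_Int_closure_eq_empty[OF open_ball, of x e X] by blast
  have "f y = g y" if "y \<in> ball x e" for y
  proof (rule analytic_continuation_open[of "ball x e \<inter> X" "ball x e" f g])
    show "f holomorphic_on ball x e" "g holomorphic_on ball x e"
      using W(3,6) e(2) holomorphic_on_subset by blast+
  qed (use assms(3) eq \<open>ball x e \<inter> X \<noteq> {}\<close> that in auto)
  then show "\<exists>e>0. \<forall>y\<in>ball x e. f y = g y" using e(1) by auto
qed

section \<open>Splitting a germ along the circles\<close>

lemma dist_gt_if_disjoint_cballs:
  fixes a b :: "'a::real_normed_vector"
  assumes "cball a r \<inter> cball b s = {}" "0 < r" "0 < s"
  shows "r + s < dist a b"
proof (rule ccontr)
  assume "\<not> r + s < dist a b"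
  define t where "t = r / (r + s)"
  define p where "p = a + t *\<^sub>R (b - a)"
  have t: "0 \<le> t" "t \<le> 1" "t * (r + s) = r" "(1 - t) * (r + s) = s"
    using assms(2,3) by (auto simp: t_def field_simps)
  have "p - a = t *\<^sub>R (b - a)" "b - p = (1 - t) *\<^sub>R (b - a)"
    by (simp_all add: p_def algebra_simps)
  then have "dist a p = t * dist a b" "dist b p = (1 - t) * dist a b"
    using t(1,2) by (simp_all add: dist_norm norm_minus_commute[of a])
  moreover have "t * dist a b \<le> r" "(1 - t) * dist a b \<le> s"
    using t \<open>\<not> r + s < dist a b\<close> by (metis mult_left_mono not_less diff_ge_0_iff_ge)+
  ultimately have "p \<in> cball a r \<inter> cball b s" by simp
  then show False using assms(1) by blast
qed

lemma exists_sphere_point_at_dist: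
  fixes c w :: complex
  assumes "0 < r"
  obtains p where "p \<in> sphere c r" "dist p w = \<bar>dist c w - r\<bar>"
proof (cases "w = c")
  case True
  then show ?thesis using that[of "c + of_real r"] assms by (simp add: dist_norm)
next
  case False
  define n where "n = dist c w"
  have n: "0 < n" "norm (w - c) = n" using False by (simp_all add: n_def dist_norm norm_minus_commute)
  define p where "p = c + of_real (r / n) * (w - c)"
  have pc: "p - c = of_real (r / n) * (w - c)" and wp: "w - p = of_real (1 - r / n) * (w - c)"
    by (simp_all add: p_def algebra_simps)
  have "norm (p - c) = r"
    unfolding pc norm_mult norm_of_real using n assms by simp
  have "norm (w - p) = \<bar>(1 - r / n) * n\<bar>"
    unfolding wp norm_mult norm_of_real abs_mult using n by simp
  also have "(1 - r / n) * n = n - r"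
    using n by (simp add: field_simps)
  finally have "norm (w - p) = \<bar>n - r\<bar>" .
  then show ?thesis
    using that[of p] \<open>norm (p - c) = r\<close> n_def by (metis dist_commute dist_norm mem_sphere)
qed

locale disjoint_circles =
  fixes c :: "nat \<Rightarrow> complex" and r :: "nat \<Rightarrow> real" and m :: nat
  assumes radius_pos: "\<And>i. i \<in> {1..m} \<Longrightarrow> 0 < r i"
    and disjoint: "\<And>i j. i \<in> {1..m} \<Longrightarrow> j \<in> {1..m} \<Longrightarrow> i \<noteq> j \<Longrightarrow>
                     cball (c i) (r i) \<inter> cball (c j) (r j) = {}"
begin

abbreviation "\<Gamma> \<equiv> circles c r m"
abbreviation "Di \<equiv> disks_int c r m"
abbreviation "Dc \<equiv> disks c r m"

lemma dist_centres: "i \<in> {1..m} \<Longrightarrow> j \<in> {1..m} \<Longrightarrow> i \<noteq> j \<Longrightarrow> r i + r j < dist (c i) (c j)"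
  using dist_gt_if_disjoint_cballs disjoint radius_pos by blast

lemma open_Di: "open Di"
  by (auto simp: disks_int_def)

lemma closed_Dc: "closed Dc"
  by (auto simp: disks_def intro!: closed_UN)

lemma compact_circles: "compact \<Gamma>"
  by (auto simp: circles_def intro!: compact_UN)

lemma Dc_eq_Di_Un_circles: "Dc = Di \<union> \<Gamma>"
  by (auto simp: disks_def disks_int_def circles_def less_le)

lemma circles_Int_Di: "\<Gamma> \<inter> Di = {}"
proof -
  have "z \<notin> ball (c s) (r s)" if "j \<in> {1..m}" "s \<in> {1..m}" "z \<in> sphere (c j) (r j)" for j s z
  proof (cases "s = j")
    case False
    show ?thesis
    proof
      assume "z \<in> ball (c s) (r s)"
      then have "z \<in> cball (c j) (r j) \<inter> cball (c s) (r s)" using that(3) by auto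
      moreover have "j \<noteq> s" using False by simp
      ultimately show False using disjoint[OF that(1,2)] by simp
    qed
  qed (use that in auto)
  then show ?thesis by (auto simp: circles_def disks_int_def)
qed

lemma circles_subset_closure_Di: "\<Gamma> \<subseteq> closure Di"
proof
  fix z assume "z \<in> \<Gamma>"
  then obtain j where j: "j \<in> {1..m}" "z \<in> sphere (c j) (r j)" by (auto simp: circles_def)
  then have "z \<in> closure (ball (c j) (r j))" using radius_pos by auto
  moreover have "ball (c j) (r j) \<subseteq> Di" using j(1) by (auto simp: disks_int_def)
  ultimately show "z \<in> closure Di" using closure_mono by blast
qed

lemma circles_subset_closure_exterior: "\<Gamma> \<subseteq> closure (- Dc)"
proof
  fix z assume "z \<in> \<Gamma>"
  then obtain j where j: "j \<in> {1..m}" "z \<in> sphere (c j) (r j)" by (auto simp: circles_def)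
  define Q where "Q = (\<Union>s\<in>{1..m}-{j}. cball (c s) (r s))"
  have "open (- Q)" by (auto simp: Q_def intro!: closed_UN)
  moreover have "z \<in> - Q" using disjoint j by (fastforce simp: Q_def)
  moreover have "z \<in> closure (- cball (c j) (r j))"
    using j by (simp add: closure_complement)
  ultimately have "z \<in> closure (- Q \<inter> - cball (c j) (r j))"
    using open_Int_closure_subset by blast
  moreover have "- Q \<inter> - cball (c j) (r j) = - Dc"
    using j(1) by (auto simp: Q_def disks_def)
  ultimately show "z \<in> closure (- Dc)" by simp
qed

lemma near_circle_in_ball_circles:
  assumes "s \<in> {1..m}" "\<bar>dist (c s) w - r s\<bar> < \<epsilon>"
  shows "w \<in> (\<Union>x\<in>\<Gamma>. ball x \<epsilon>)"
proof -
  obtain p where p: "p \<in> sphere (c s) (r s)" "dist p w = \<bar>dist (c s) w - r s\<bar>"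
    by (rule exists_sphere_point_at_dist[OF radius_pos[OF assms(1)]])
  then have "p \<in> \<Gamma>" using assms(1) by (auto simp: circles_def)
  moreover have "w \<in> ball p \<epsilon>" using p(2) assms(2) by simp
  ultimately show ?thesis by blast
qed

lemma eventually_notin_Dc: "eventually (\<lambda>z. z \<notin> Dc) at_infinity"
proof -
  have "bounded Dc" by (auto simp: disks_def)
  then obtain B where "\<And>x. x \<in> Dc \<Longrightarrow> norm x \<le> B" using bounded_iff by blast
  then show ?thesis unfolding eventually_at_infinity by (intro exI[of _ "B + 1"]) force
qed


end

locale cauchy_split = disjoint_circles +
  fixes f :: "complex \<Rightarrow> complex" and U :: "complex set" and \<delta> :: real
  assumes open_U: "open U" and holo_f: "f holomorphic_on U"
    and \<delta>_pos: "0 < \<delta>" and \<delta>_less: "\<And>s. s \<in> {1..m} \<Longrightarrow> \<delta> < r s"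
    and annulus_U: "\<And>s. s \<in> {1..m} \<Longrightarrow> {w. r s - \<delta> \<le> dist (c s) w \<and> dist (c s) w \<le> r s + \<delta>} \<subseteq> U"
    and separated: "\<And>i j. i \<in> {1..m} \<Longrightarrow> j \<in> {1..m} \<Longrightarrow> i \<noteq> j \<Longrightarrow> r i + r j + 2 * \<delta> < dist (c i) (c j)"
begin

definition rin :: "nat \<Rightarrow> real" where "rin s = r s - \<delta> / 2"
definition rout :: "nat \<Rightarrow> real" where "rout s = r s + \<delta> / 2"

definition cauchy_circle :: "nat \<Rightarrow> real \<Rightarrow> complex \<Rightarrow> complex" where
  "cauchy_circle s \<rho> z = contour_integral (circlepath (c s) \<rho>) (\<lambda>p. f p / (p - z))"

definition inv_2pi_i :: complex where "inv_2pi_i = 1 / (2 * of_real pi * \<i>)"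

text \<open>Moving a circle within its annulus does not change its Cauchy integral away from the annulus.
  With every circle shrunk, the exterior Cauchy integral becomes holomorphic across \<open>\<Gamma>\<close>; enlarging
  only the circle \<open>j\<close> near the disk \<open>j\<close> does the same for the interior one. Across the annulus the
  sum of the two is \<open>f\<close> by the jump relation.\<close>
definition split_minus :: "complex \<Rightarrow> complex" where
  "split_minus z = - (inv_2pi_i * (\<Sum>s\<in>{1..m}. cauchy_circle s (rin s) z))"

definition split_plus :: "complex \<Rightarrow> complex" where
  "split_plus z = inv_2pi_i * (\<Sum>s\<in>{1..m}.
     if z \<in> ball (c s) (rout s) then cauchy_circle s (rout s) z else cauchy_circle s (rin s) z)"

lemma radii:
  assumes "s \<in> {1..m}"
  shows "0 < rin s" "rin s < r s" "r s < rout s"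
  using \<delta>_pos \<delta>_less[OF assms] by (simp_all add: rin_def rout_def)

lemma annulus_subset:
  assumes "s \<in> {1..m}" "rin s \<le> a" "b \<le> rout s"
  shows "{w. a \<le> dist (c s) w \<and> dist (c s) w \<le> b} \<subseteq> U"
proof (rule order_trans[OF _ annulus_U[OF assms(1)]])
  show "{w. a \<le> dist (c s) w \<and> dist (c s) w \<le> b}
        \<subseteq> {w. r s - \<delta> \<le> dist (c s) w \<and> dist (c s) w \<le> r s + \<delta>}"
    using assms(2,3) \<delta>_pos by (auto simp: rin_def rout_def)
qed

lemma far_from_other_disks:
  assumes "s \<in> {1..m}" "j \<in> {1..m}" "s \<noteq> j" "dist (c j) z \<le> rout j"
  shows "rout s < dist (c s) z"
proof -
  have "dist (c s) (c j) \<le> dist (c s) z + dist (c j) z"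
    by (metis dist_commute dist_triangle)
  then show ?thesis
    using separated[OF assms(1-3)] assms(4) \<delta>_pos unfolding rout_def by linarith
qed

lemma holomorphic_on_cauchy_circle:
  assumes "s \<in> {1..m}" "\<rho> \<in> {rin s, rout s}"
  shows "cauchy_circle s \<rho> holomorphic_on - sphere (c s) \<rho>"
proof -
  have "sphere (c s) \<rho> \<subseteq> {w. \<rho> \<le> dist (c s) w \<and> dist (c s) w \<le> \<rho>}"
    by auto
  also have "\<dots> \<subseteq> U"
    using assms(2) radii[OF assms(1)] by (intro annulus_subset[OF assms(1)]) auto
  finally have "continuous_on (sphere (c s) \<rho>) f"
    using holomorphic_on_imp_continuous_on[OF holo_f] continuous_on_subset by blast
  moreover have "0 < \<rho>"
    using assms(2) radii[OF assms(1)] by auto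
  ultimately show ?thesis
    unfolding cauchy_circle_def[abs_def] by (rule holomorphic_on_cauchy_integral_circlepath)
qed

lemma cauchy_circle_inside:
  assumes "s \<in> {1..m}" "dist (c s) z < r s"
  shows "cauchy_circle s (r s) z = cauchy_circle s (rout s) z"
  unfolding cauchy_circle_def
  by (rule cauchy_integral_circlepath_radius_eq[OF open_U holo_f])
     (use assms radii[OF assms(1)] annulus_subset[OF assms(1)] in auto)

lemma cauchy_circle_outside:
  assumes "s \<in> {1..m}" "r s < dist (c s) z"
  shows "cauchy_circle s (rin s) z = cauchy_circle s (r s) z"
  unfolding cauchy_circle_def
  by (rule cauchy_integral_circlepath_radius_eq[OF open_U holo_f])
     (use assms radii[OF assms(1)] annulus_subset[OF assms(1)] in auto)

lemma cauchy_circle_jump: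
  assumes "s \<in> {1..m}" "rin s < dist (c s) z" "dist (c s) z < rout s"
  shows "cauchy_circle s (rout s) z - cauchy_circle s (rin s) z = 2 * of_real pi * \<i> * f z"
  unfolding cauchy_circle_def
  by (rule cauchy_integral_circlepath_jump[OF open_U holo_f])
     (use assms radii[OF assms(1)] annulus_subset[OF assms(1)] in auto)

lemma circles_outside_inner_disks:
  assumes "z \<in> \<Gamma>" "s \<in> {1..m}"
  shows "z \<notin> cball (c s) (rin s)"
proof -
  obtain j where j: "j \<in> {1..m}" "z \<in> sphere (c j) (r j)"
    using assms(1) by (auto simp: circles_def)
  show ?thesis
  proof (cases "s = j")
    case False
    have "z \<in> cball (c j) (r j)" using j(2) by simp
    then have "z \<notin> cball (c s) (r s)" using disjoint[OF j(1) assms(2) not_sym[OF False]] by blast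
    then show ?thesis using radii(2)[OF assms(2)] by auto
  qed (use j radii(2)[OF j(1)] in auto)
qed

lemma holomorphic_on_split_minus: "split_minus holomorphic_on - (\<Union>s\<in>{1..m}. cball (c s) (rin s))"
proof -
  have "cauchy_circle s (rin s) holomorphic_on - (\<Union>s\<in>{1..m}. cball (c s) (rin s))"
    if "s \<in> {1..m}" for s
  proof (rule holomorphic_on_subset[OF holomorphic_on_cauchy_circle[OF that]])
    have "- (\<Union>s\<in>{1..m}. cball (c s) (rin s)) \<subseteq> - cball (c s) (rin s)"
      using that by blast
    then show "- (\<Union>s\<in>{1..m}. cball (c s) (rin s)) \<subseteq> - sphere (c s) (rin s)"
      by auto
  qed simp
  then show ?thesis
    unfolding split_minus_def[abs_def] by (intro holomorphic_intros) auto
qed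

lemma split_minus_eq_cauchy_int:
  assumes "z \<notin> Dc"
  shows "split_minus z = - cauchy_int c r m f z"
proof -
  have "cauchy_circle s (rin s) z = cauchy_circle s (r s) z" if "s \<in> {1..m}" for s
  proof (rule cauchy_circle_outside[OF that])
    have "z \<notin> cball (c s) (r s)" using assms that unfolding disks_def by blast
    then show "r s < dist (c s) z" by simp
  qed
  then show ?thesis
    by (simp add: split_minus_def cauchy_int_def cauchy_circle_def inv_2pi_i_def)
qed

lemma is_minus_part_split_minus: "is_minus_part c r m f split_minus"
  unfolding is_minus_part_def
proof (intro exI conjI ballI)
  define V where "V = - (\<Union>s\<in>{1..m}. cball (c s) (rin s))"
  show "open V" by (auto simp: V_def intro!: closed_UN)
  show "\<Gamma> \<subseteq> V"
    using circles_outside_inner_disks by (auto simp: V_def)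
  have "- Dc \<subseteq> V"
    unfolding V_def disks_def
  proof (intro compl_mono UN_mono)
    show "cball (c s) (rin s) \<subseteq> cball (c s) (r s)" if "s \<in> {1..m}" for s
      using radii(2)[OF that] by auto
  qed simp
  then show "split_minus holomorphic_on V \<union> - Dc"
    using holomorphic_on_split_minus by (simp add: V_def Un_absorb2)
qed (simp add: split_minus_eq_cauchy_int)

lemma split_plus_near_disk:
  assumes "j \<in> {1..m}" "z \<in> ball (c j) (rout j)"
  shows "split_plus z = inv_2pi_i * (cauchy_circle j (rout j) z + (\<Sum>s\<in>{1..m}-{j}. cauchy_circle s (rin s) z))"
proof -
  have "z \<notin> ball (c s) (rout s)" if "s \<in> {1..m} - {j}" for s
    using far_from_other_disks[of s j z] that assms by auto
  then show ?thesis
    using assms by (simp add: split_plus_def sum.remove[of _ j])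
qed

lemma holomorphic_on_split_plus: "split_plus holomorphic_on (\<Union>j\<in>{1..m}. ball (c j) (rout j))"
proof (rule holomorphic_on_UN_open)
  fix j assume j: "j \<in> {1..m}"
  have "cauchy_circle s (rin s) holomorphic_on ball (c j) (rout j)" if "s \<in> {1..m} - {j}" for s
  proof (rule holomorphic_on_subset[OF holomorphic_on_cauchy_circle])
    show "ball (c j) (rout j) \<subseteq> - sphere (c s) (rin s)"
    proof
      fix w assume "w \<in> ball (c j) (rout j)"
      then have "rout s < dist (c s) w"
        using that j by (intro far_from_other_disks) auto
      then show "w \<in> - sphere (c s) (rin s)"
        using radii(2,3)[of s] that by auto
    qed
  qed (use that in auto)
  moreover have "cauchy_circle j (rout j) holomorphic_on ball (c j) (rout j)"
    by (rule holomorphic_on_subset[OF holomorphic_on_cauchy_circle[OF j]]) auto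
  ultimately have "(\<lambda>z. inv_2pi_i * (cauchy_circle j (rout j) z + (\<Sum>s\<in>{1..m}-{j}. cauchy_circle s (rin s) z)))
                     holomorphic_on ball (c j) (rout j)"
    by (intro holomorphic_intros) auto
  then show "split_plus holomorphic_on ball (c j) (rout j)"
    by (rule holomorphic_transform) (use split_plus_near_disk[OF j] in auto)
qed auto

lemma split_plus_eq_cauchy_int:
  assumes "z \<in> Di"
  shows "split_plus z = cauchy_int c r m f z"
proof -
  obtain j where j: "j \<in> {1..m}" "dist (c j) z < r j"
    using assms by (auto simp: disks_int_def)
  have "cauchy_circle s (rin s) z = cauchy_circle s (r s) z" if "s \<in> {1..m} - {j}" for s
  proof (rule cauchy_circle_outside)
    show "r s < dist (c s) z"
      using that j far_from_other_disks[of s j z] radii(3)[of s] radii(3)[of j] by force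
  qed (use that in auto)
  then have "(\<Sum>s\<in>{1..m}-{j}. cauchy_circle s (rin s) z) = (\<Sum>s\<in>{1..m}-{j}. cauchy_circle s (r s) z)"
    by (rule sum.cong[OF refl])
  moreover have "z \<in> ball (c j) (rout j)"
    using j radii(3)[of j] by auto
  then have "split_plus z = inv_2pi_i * (cauchy_circle j (rout j) z + (\<Sum>s\<in>{1..m}-{j}. cauchy_circle s (rin s) z))"
    by (rule split_plus_near_disk[OF j(1)])
  moreover have "cauchy_int c r m f z = inv_2pi_i * (cauchy_circle j (r j) z + (\<Sum>s\<in>{1..m}-{j}. cauchy_circle s (r s) z))"
    unfolding cauchy_int_def inv_2pi_i_def cauchy_circle_def using j(1) by (simp add: sum.remove)
  ultimately show ?thesis
    using cauchy_circle_inside[OF j] by simp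
qed

lemma is_plus_part_split_plus: "is_plus_part c r m f split_plus"
  unfolding is_plus_part_def
proof (intro exI conjI ballI)
  define V where "V = (\<Union>j\<in>{1..m}. ball (c j) (rout j))"
  show "open V" by (auto simp: V_def)
  show "\<Gamma> \<subseteq> V"
    unfolding V_def circles_def
  proof (rule UN_mono)
    show "sphere (c j) (r j) \<subseteq> ball (c j) (rout j)" if "j \<in> {1..m}" for j
      using radii(3)[OF that] by auto
  qed simp
  have "Di \<subseteq> V"
    unfolding V_def disks_int_def
  proof (rule UN_mono)
    show "ball (c j) (r j) \<subseteq> ball (c j) (rout j)" if "j \<in> {1..m}" for j
      using radii(3)[OF that] by auto
  qed simp
  then show "split_plus holomorphic_on V \<union> Di"
    using holomorphic_on_split_plus by (simp add: V_def Un_absorb2)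
qed (rule split_plus_eq_cauchy_int)

lemma split_plus_add_split_minus: "eventually (\<lambda>z. split_plus z + split_minus z = f z) (near \<Gamma>)"
  unfolding eventually_near
proof (intro exI conjI ballI)
  define W where "W = (\<Union>j\<in>{1..m}. ball (c j) (rout j) - cball (c j) (rin j))"
  show "open W" by (auto simp: W_def)
  show "\<Gamma> \<subseteq> W"
    unfolding W_def circles_def
  proof (rule UN_mono)
    show "sphere (c j) (r j) \<subseteq> ball (c j) (rout j) - cball (c j) (rin j)" if "j \<in> {1..m}" for j
      using radii(2,3)[OF that] by auto
  qed simp
  show "split_plus z + split_minus z = f z" if "z \<in> W" for z
  proof -
    obtain j where j: "j \<in> {1..m}" "z \<in> ball (c j) (rout j)" "z \<notin> cball (c j) (rin j)"
      using \<open>z \<in> W\<close> by (auto simp: W_def)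
    have plus: "split_plus z = inv_2pi_i * (cauchy_circle j (rout j) z + (\<Sum>s\<in>{1..m}-{j}. cauchy_circle s (rin s) z))"
      by (rule split_plus_near_disk[OF j(1,2)])
    have minus: "split_minus z = - (inv_2pi_i * (cauchy_circle j (rin j) z + (\<Sum>s\<in>{1..m}-{j}. cauchy_circle s (rin s) z)))"
      unfolding split_minus_def using j(1) by (simp add: sum.remove)
    have "split_plus z + split_minus z = inv_2pi_i * (cauchy_circle j (rout j) z - cauchy_circle j (rin j) z)"
      unfolding plus minus by (simp add: algebra_simps)
    also have "\<dots> = f z"
      using cauchy_circle_jump[OF j(1)] j(2,3) by (simp add: inv_2pi_i_def)
    finally show ?thesis .
  qed
qed

end

context disjoint_circles
begin

lemma cauchy_split_width:
  assumes "open U" "\<Gamma> \<subseteq> U" "f holomorphic_on U"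
  obtains \<delta> where "cauchy_split c r m f U \<delta>"
proof -
  obtain \<epsilon> where \<epsilon>: "0 < \<epsilon>" "(\<Union>x\<in>\<Gamma>. ball x \<epsilon>) \<subseteq> U"
    using compact_subset_open_imp_ball_epsilon_subset[OF compact_circles assms(1,2)] by blast
  have small: "\<forall>\<^sub>F \<delta> in at_right 0. \<delta> < x" if "0 < x" for x :: real
    using order_tendstoD(2)[OF tendsto_ident_at that] .
  have gaps: "0 < (dist (c i) (c j) - r i - r j) / 2" if "i \<in> {1..m}" "j \<in> {1..m} - {i}" for i j
    using dist_centres[of i j] that by auto
  have "\<forall>\<^sub>F \<delta> in at_right 0. \<forall>s\<in>{1..m}. \<delta> < r s"
    by (intro eventually_ball_finite ballI small) (auto intro: radius_pos)
  moreover have "\<forall>\<^sub>F \<delta> in at_right 0. \<forall>i\<in>{1..m}. \<forall>j\<in>{1..m} - {i}.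
                   \<delta> < (dist (c i) (c j) - r i - r j) / 2"
    by (intro eventually_ball_finite ballI small gaps) simp_all
  ultimately have "\<forall>\<^sub>F \<delta> in at_right 0. 0 < \<delta> \<and> \<delta> < \<epsilon> \<and> (\<forall>s\<in>{1..m}. \<delta> < r s) \<and>
          (\<forall>i\<in>{1..m}. \<forall>j\<in>{1..m} - {i}. \<delta> < (dist (c i) (c j) - r i - r j) / 2)"
    using eventually_at_right_less small[OF \<epsilon>(1)] by (simp add: eventually_conj_iff)
  from eventually_happens'[OF trivial_limit_at_right_real this]
  obtain \<delta> where \<delta>: "0 < \<delta>" "\<delta> < \<epsilon>" "\<forall>s\<in>{1..m}. \<delta> < r s"
    "\<forall>i\<in>{1..m}. \<forall>j\<in>{1..m} - {i}. \<delta> < (dist (c i) (c j) - r i - r j) / 2"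
    by (elim exE conjE) iprover
  have annulus: "w \<in> U"
    if "s \<in> {1..m}" "r s - \<delta> \<le> dist (c s) w" "dist (c s) w \<le> r s + \<delta>" for s w
    using near_circle_in_ball_circles[OF that(1), of w \<epsilon>] that(2,3) \<delta>(2) \<epsilon>(2) by force
  have separated: "r i + r j + 2 * \<delta> < dist (c i) (c j)"
    if "i \<in> {1..m}" "j \<in> {1..m}" "i \<noteq> j" for i j
  proof -
    have "\<delta> < (dist (c i) (c j) - r i - r j) / 2" using bspec[OF bspec[OF \<delta>(4) that(1)], of j] that by simp
    then show ?thesis by (simp add: field_simps)
  qed
  show ?thesis
  proof (rule that, unfold_locales)
    show "\<delta> < r s" if "s \<in> {1..m}" for s using \<delta>(3) that by simp
  qed (use assms(1,3) \<delta>(1) in \<open>auto intro: annulus separated\<close>)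
qed

lemma cauchy_split_exists:
  assumes "f analytic_on \<Gamma>"
  obtains gp gm where "is_plus_part c r m f gp" "is_minus_part c r m f gm"
    "eventually (\<lambda>z. gp z + gm z = f z) (near \<Gamma>)"
proof -
  obtain U where U: "open U" "\<Gamma> \<subseteq> U" "f holomorphic_on U"
    using assms by (auto simp: analytic_on_holomorphic)
  obtain \<delta> where "cauchy_split c r m f U \<delta>"
    by (rule cauchy_split_width[OF U])
  then interpret cauchy_split c r m f U \<delta> .
  show ?thesis
    using that is_plus_part_split_plus is_minus_part_split_minus split_plus_add_split_minus by blast
qed

lemma analytic_on_if_holomorphic_on_Un:
  assumes "g holomorphic_on (V \<union> X)" "open V" "open X" "S \<subseteq> V"
  shows "g analytic_on (S \<union> X)"
  using assms analytic_on_open[of "V \<union> X"] analytic_on_subset by blast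

lemma is_plus_part_unique:
  assumes "is_plus_part c r m f g1" "is_plus_part c r m f g2"
  shows "eventually (\<lambda>z. g1 z = g2 z) (near \<Gamma>)"
proof (rule eventually_eq_near_if_eq_on_open[OF _ _ open_Di circles_subset_closure_Di])
  show "g1 analytic_on \<Gamma> \<union> Di" "g2 analytic_on \<Gamma> \<union> Di"
    using assms open_Di analytic_on_if_holomorphic_on_Un by (auto simp: is_plus_part_def)
  show "g1 z = g2 z" if "z \<in> Di" for z
    using assms that by (auto simp: is_plus_part_def)
qed

lemma is_minus_part_unique:
  assumes "is_minus_part c r m f g1" "is_minus_part c r m f g2"
  shows "eventually (\<lambda>z. g1 z = g2 z) (near \<Gamma>)"
proof (rule eventually_eq_near_if_eq_on_open[OF _ _ _ circles_subset_closure_exterior])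
  show "open (- Dc)" using closed_Dc by auto
  then show "g1 analytic_on \<Gamma> \<union> - Dc" "g2 analytic_on \<Gamma> \<union> - Dc"
    using assms analytic_on_if_holomorphic_on_Un by (auto simp: is_minus_part_def)
  show "g1 z = g2 z" if "z \<in> - Dc" for z
    using assms that by (auto simp: is_minus_part_def)
qed


lemma pplus_pminus:
  assumes "f analytic_on \<Gamma>"
  shows "is_plus_part c r m f (pplus c r m f)" "is_minus_part c r m f (pminus c r m f)"
    "eventually (\<lambda>z. pplus c r m f z + pminus c r m f z = f z) (near \<Gamma>)"
proof -
  obtain gp gm where g: "is_plus_part c r m f gp" "is_minus_part c r m f gm"
    "eventually (\<lambda>z. gp z + gm z = f z) (near \<Gamma>)"
    using cauchy_split_exists[OF assms] by blast
  show p: "is_plus_part c r m f (pplus c r m f)"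
    unfolding pplus_def by (rule someI[of "is_plus_part c r m f", OF g(1)])
  show n: "is_minus_part c r m f (pminus c r m f)"
    unfolding pminus_def by (rule someI[of "is_minus_part c r m f", OF g(2)])
  show "eventually (\<lambda>z. pplus c r m f z + pminus c r m f z = f z) (near \<Gamma>)"
    using is_plus_part_unique[OF p g(1)] is_minus_part_unique[OF n g(2)] g(3)
    by eventually_elim simp
qed

text \<open>The functions of the kind \<open>f\<^sub>-\<close>; those of the kind \<open>f\<^sub>+\<close> are the functions analytic on \<open>Dc\<close>.\<close>
definition vanishes_outside :: "(complex \<Rightarrow> complex) \<Rightarrow> bool" where
  "vanishes_outside g \<longleftrightarrow> g analytic_on - Di \<and> (g \<longlongrightarrow> 0) at_infinity"

lemma analytic_on_pplus:
  assumes "f analytic_on \<Gamma>"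
  shows "pplus c r m f analytic_on Dc"
proof -
  obtain V where "open V" "\<Gamma> \<subseteq> V" "pplus c r m f holomorphic_on V \<union> Di"
    using pplus_pminus(1)[OF assms] by (auto simp: is_plus_part_def)
  then have "pplus c r m f analytic_on \<Gamma> \<union> Di"
    using open_Di by (intro analytic_on_if_holomorphic_on_Un)
  then show ?thesis
    by (simp add: Dc_eq_Di_Un_circles Un_commute)
qed

lemma vanishes_outside_pminus:
  assumes "f analytic_on \<Gamma>"
  shows "vanishes_outside (pminus c r m f)"
  unfolding vanishes_outside_def
proof
  obtain V where V: "open V" "\<Gamma> \<subseteq> V" "pminus c r m f holomorphic_on V \<union> - Dc"
    and eq: "\<And>z. z \<in> - Dc \<Longrightarrow> pminus c r m f z = - cauchy_int c r m f z"
    using pplus_pminus(2)[OF assms] by (auto simp: is_minus_part_def)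
  have "- Di = \<Gamma> \<union> - Dc"
    using Dc_eq_Di_Un_circles circles_Int_Di by auto
  then show "pminus c r m f analytic_on - Di"
    using V closed_Dc analytic_on_if_holomorphic_on_Un by (metis open_Compl)
  have "continuous_on (sphere (c s) (r s)) f" if "s \<in> {1..m}" for s
  proof (rule continuous_on_subset[OF analytic_imp_holomorphic[OF assms, THEN holomorphic_on_imp_continuous_on]])
    show "sphere (c s) (r s) \<subseteq> \<Gamma>" using that by (auto simp: circles_def)
  qed
  then have "((\<lambda>z. - cauchy_int c r m f z) \<longlongrightarrow> - 0) at_infinity"
    unfolding cauchy_int_def
    by (intro tendsto_minus tendsto_mult_right_zero tendsto_null_sum
          cauchy_integral_circlepath_tendsto_0 radius_pos)
  moreover have "eventually (\<lambda>z. - cauchy_int c r m f z = pminus c r m f z) at_infinity"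
    using eventually_notin_Dc by eventually_elim (simp add: eq)
  ultimately show "(pminus c r m f \<longlongrightarrow> 0) at_infinity"
    by (simp add: Lim_transform_eventually)
qed

lemma vanishes_outside_add: "vanishes_outside f \<Longrightarrow> vanishes_outside g \<Longrightarrow> vanishes_outside (\<lambda>z. f z + g z)"
  by (auto simp: vanishes_outside_def intro: analytic_intros tendsto_add_zero)

lemma vanishes_outside_diff: "vanishes_outside f \<Longrightarrow> vanishes_outside g \<Longrightarrow> vanishes_outside (\<lambda>z. f z - g z)"
  using tendsto_diff[of f 0 at_infinity g 0] by (auto simp: vanishes_outside_def intro: analytic_intros)

lemma vanishes_outside_mult: "vanishes_outside f \<Longrightarrow> vanishes_outside g \<Longrightarrow> vanishes_outside (\<lambda>z. f z * g z)"
  by (auto simp: vanishes_outside_def intro: analytic_intros tendsto_mult_zero)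

lemma vanishes_outside_uminus: "vanishes_outside f \<Longrightarrow> vanishes_outside (\<lambda>z. - f z)"
  using tendsto_minus[of f 0 at_infinity] by (auto simp: vanishes_outside_def intro: analytic_intros)

text \<open>Glueing \<open>A\<close> on the disks to \<open>-B\<close> outside gives an entire function vanishing at infinity,
  which is \<open>0\<close> by Liouville's theorem.\<close>
lemma plus_minus_sum_eq_0D:
  assumes "A analytic_on Dc" "vanishes_outside B" "eventually (\<lambda>z. A z + B z = 0) (near \<Gamma>)"
  shows "eventually (\<lambda>z. A z = 0) (near \<Gamma>)" "eventually (\<lambda>z. B z = 0) (near \<Gamma>)"
proof -
  obtain UA where UA: "open UA" "Dc \<subseteq> UA" "A holomorphic_on UA"
    using assms(1) by (auto simp: analytic_on_holomorphic)
  obtain UB where UB: "open UB" "- Di \<subseteq> UB" "B holomorphic_on UB"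
    and B0: "(B \<longlongrightarrow> 0) at_infinity"
    using assms(2) by (auto simp: vanishes_outside_def analytic_on_holomorphic)
  obtain U0 where U0: "open U0" "\<Gamma> \<subseteq> U0" "\<And>z. z \<in> U0 \<Longrightarrow> A z + B z = 0"
    using assms(3) by (auto simp: eventually_near)
  define Om where "Om = U0 \<inter> UA \<inter> UB"
  have "\<Gamma> \<subseteq> Dc" "\<Gamma> \<subseteq> - Di" "Di \<subseteq> Dc"
    using Dc_eq_Di_Un_circles circles_Int_Di by auto
  then have Om: "open Om" "\<Gamma> \<subseteq> Om" "Om \<union> Di \<subseteq> UA" "Om \<union> - Dc \<subseteq> UB"
    using U0(1,2) UA(1,2) UB(1,2) by (auto simp: Om_def)
  define H where "H z = (if z \<in> Dc then A z else - B z)" for z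
  have sum0: "A z = - B z" if "z \<in> Om" for z
    using U0(3)[of z] that by (simp add: Om_def eq_neg_iff_add_eq_0)
  have "H holomorphic_on Om \<union> Di"
    using holomorphic_on_subset[OF UA(3) Om(3)]
    by (rule holomorphic_transform) (use sum0 \<open>Di \<subseteq> Dc\<close> in \<open>auto simp: H_def\<close>)
  moreover have "H holomorphic_on Om \<union> - Dc"
    using holomorphic_on_subset[OF UB(3) Om(4), THEN holomorphic_on_minus]
    by (rule holomorphic_transform) (use sum0 in \<open>auto simp: H_def\<close>)
  ultimately have "H holomorphic_on (Om \<union> Di) \<union> (Om \<union> - Dc)"
    using Om(1) open_Di closed_Dc by (intro holomorphic_on_Un) auto
  moreover have "(Om \<union> Di) \<union> (Om \<union> - Dc) = UNIV"
    using Om(2) Dc_eq_Di_Un_circles by auto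
  ultimately have "H holomorphic_on UNIV" by simp
  moreover have "eventually (\<lambda>z. - B z = H z) at_infinity"
    using eventually_notin_Dc by eventually_elim (simp add: H_def)
  then have "(H \<longlongrightarrow> 0) at_infinity"
    using tendsto_minus[OF B0] by (simp add: Lim_transform_eventually)
  ultimately have H0: "H z = 0" for z
    using Liouville_weak_0 by blast
  have "A z = 0" "B z = 0" if "z \<in> Om" for z
    using H0[of z] sum0[OF that] by (auto simp: H_def split: if_splits)
  then show "eventually (\<lambda>z. A z = 0) (near \<Gamma>)" "eventually (\<lambda>z. B z = 0) (near \<Gamma>)"
    unfolding eventually_near using Om(1,2) by blast+
qed

lemma decomposition_unique:
  assumes "f analytic_on \<Gamma>" "A analytic_on Dc" "vanishes_outside B"
    and "eventually (\<lambda>z. f z = A z + B z) (near \<Gamma>)"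
  shows "eventually (\<lambda>z. pplus c r m f z = A z) (near \<Gamma>)"
    "eventually (\<lambda>z. pminus c r m f z = B z) (near \<Gamma>)"
proof -
  have "eventually (\<lambda>z. (pplus c r m f z - A z) + (pminus c r m f z - B z) = 0) (near \<Gamma>)"
    using pplus_pminus(3)[OF assms(1)] assms(4) by eventually_elim (simp add: algebra_simps)
  note zero = plus_minus_sum_eq_0D[OF analytic_on_diff[OF analytic_on_pplus[OF assms(1)] assms(2)]
      vanishes_outside_diff[OF vanishes_outside_pminus[OF assms(1)] assms(3)] this]
  show "eventually (\<lambda>z. pplus c r m f z = A z) (near \<Gamma>)"
    using zero(1) by eventually_elim simp
  show "eventually (\<lambda>z. pminus c r m f z = B z) (near \<Gamma>)"
    using zero(2) by eventually_elim simp
qed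

lemma analytic_on_circles_pplus: "f analytic_on \<Gamma> \<Longrightarrow> pplus c r m f analytic_on \<Gamma>"
  using analytic_on_pplus analytic_on_subset Dc_eq_Di_Un_circles by blast

lemma analytic_on_circles_pminus: "f analytic_on \<Gamma> \<Longrightarrow> pminus c r m f analytic_on \<Gamma>"
  using vanishes_outside_pminus circles_Int_Di analytic_on_subset
  by (metis Compl_iff subsetI vanishes_outside_def disjoint_iff)

lemma pplus_eq_diff_pminus:
  assumes "f analytic_on \<Gamma>"
  shows "eventually (\<lambda>z. pplus c r m f z = f z - pminus c r m f z) (near \<Gamma>)"
  using pplus_pminus(3)[OF assms] by eventually_elim (simp add: eq_diff_eq)

lemma pplus_pminus_cong:
  assumes "f analytic_on \<Gamma>" "g analytic_on \<Gamma>" "eventually (\<lambda>z. f z = g z) (near \<Gamma>)"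
  shows "eventually (\<lambda>z. pplus c r m f z = pplus c r m g z) (near \<Gamma>)"
    "eventually (\<lambda>z. pminus c r m f z = pminus c r m g z) (near \<Gamma>)"
proof -
  have "eventually (\<lambda>z. f z = pplus c r m g z + pminus c r m g z) (near \<Gamma>)"
    using assms(3) pplus_pminus(3)[OF assms(2)] by eventually_elim simp
  from decomposition_unique[OF assms(1) analytic_on_pplus[OF assms(2)] vanishes_outside_pminus[OF assms(2)] this]
  show "eventually (\<lambda>z. pplus c r m f z = pplus c r m g z) (near \<Gamma>)"
    "eventually (\<lambda>z. pminus c r m f z = pminus c r m g z) (near \<Gamma>)" .
qed

lemma pplus_pminus_add:
  assumes "f analytic_on \<Gamma>" "g analytic_on \<Gamma>"
  shows "eventually (\<lambda>z. pplus c r m (\<lambda>z. f z + g z) z = pplus c r m f z + pplus c r m g z) (near \<Gamma>)"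
    "eventually (\<lambda>z. pminus c r m (\<lambda>z. f z + g z) z = pminus c r m f z + pminus c r m g z) (near \<Gamma>)"
proof -
  have "eventually (\<lambda>z. f z + g z = (pplus c r m f z + pplus c r m g z) + (pminus c r m f z + pminus c r m g z)) (near \<Gamma>)"
    using pplus_pminus(3)[OF assms(1)] pplus_pminus(3)[OF assms(2)] by eventually_elim (simp add: algebra_simps)
  from decomposition_unique[OF analytic_on_add[OF assms]
      analytic_on_add[OF analytic_on_pplus[OF assms(1)] analytic_on_pplus[OF assms(2)]]
      vanishes_outside_add[OF vanishes_outside_pminus[OF assms(1)] vanishes_outside_pminus[OF assms(2)]] this]
  show "eventually (\<lambda>z. pplus c r m (\<lambda>z. f z + g z) z = pplus c r m f z + pplus c r m g z) (near \<Gamma>)"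
    "eventually (\<lambda>z. pminus c r m (\<lambda>z. f z + g z) z = pminus c r m f z + pminus c r m g z) (near \<Gamma>)" .
qed

end

section \<open>The product on germs\<close>

locale germ_product = disjoint_circles +
  fixes a ah :: "complex \<Rightarrow> complex"
  assumes analytic_deriv_a: "deriv a analytic_on \<Gamma>"
    and analytic_deriv_ah: "deriv ah analytic_on \<Gamma>"
begin

abbreviation "P \<equiv> pplus c r m"
abbreviation "N \<equiv> pminus c r m"
abbreviation "mul \<equiv> mult c r m a ah"
abbreviation "A w \<equiv> (\<lambda>z. fst w z * deriv a z)"
abbreviation "B w \<equiv> (\<lambda>z. snd w z * deriv ah z)"
abbreviation "T w \<equiv> (\<lambda>z. fst w z * deriv a z + snd w z * deriv ah z)"
abbreviation "S w \<equiv> (\<lambda>z. fst w z + snd w z)"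
abbreviation "L w \<equiv> (\<lambda>z. P (A w) z - N (B w) z)"
abbreviation "analytic_pair w \<equiv> fst w analytic_on \<Gamma> \<and> snd w analytic_on \<Gamma>"

lemma mult_fst:
  "fst (mul w1 w2) z = fst w2 z * P (A w1) z - fst w1 z * N (A w2) z - fst w2 z * N (B w1) z - fst w1 z * N (B w2) z"
  by (simp add: mult_def Let_def)

lemma mult_snd:
  "snd (mul w1 w2) z = snd w2 z * P (B w1) z - snd w1 z * N (B w2) z + snd w1 z * P (A w2) z + snd w2 z * P (A w1) z"
  by (simp add: mult_def Let_def)

lemma eta_fst: "fst (eta c r m a ah w) z = deriv a z * N (S w) z - N (T w) z"
  by (simp add: eta_def Let_def)

lemma eta_snd: "snd (eta c r m a ah w) z = - deriv ah z * P (S w) z + P (T w) z"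
  by (simp add: eta_def Let_def)

lemma analytic_A: "analytic_pair w \<Longrightarrow> A w analytic_on \<Gamma>"
  using analytic_deriv_a by (auto intro: analytic_intros)

lemma analytic_B: "analytic_pair w \<Longrightarrow> B w analytic_on \<Gamma>"
  using analytic_deriv_ah by (auto intro: analytic_intros)

lemma analytic_T: "analytic_pair w \<Longrightarrow> T w analytic_on \<Gamma>"
  using analytic_A analytic_B by (auto intro: analytic_intros)

lemma analytic_S: "analytic_pair w \<Longrightarrow> S w analytic_on \<Gamma>"
  by (auto intro: analytic_intros)

lemma analytic_pair_mult:
  assumes "analytic_pair w1" "analytic_pair w2"
  shows "analytic_pair (mul w1 w2)"
  unfolding mult_fst[abs_def] mult_snd[abs_def] fst_conv snd_conv
  using assms
  by (intro conjI analytic_on_diff analytic_on_add analytic_on_mult analytic_on_circles_pplus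
        analytic_on_circles_pminus analytic_deriv_a analytic_deriv_ah) auto

lemma mult_eq_near:
  assumes w1: "analytic_pair w1" and w2: "analytic_pair w2"
  shows "eventually (\<lambda>z. fst (mul w1 w2) z = L w1 z * fst w2 z - fst w1 z * N (T w2) z) (near \<Gamma>)"
    "eventually (\<lambda>z. snd (mul w1 w2) z = L w1 z * snd w2 z + snd w1 z * P (T w2) z) (near \<Gamma>)"
proof -
  note add2 = pplus_pminus_add[OF analytic_A[OF w2] analytic_B[OF w2]]
  show "eventually (\<lambda>z. fst (mul w1 w2) z = L w1 z * fst w2 z - fst w1 z * N (T w2) z) (near \<Gamma>)"
    using add2(2) by eventually_elim (simp only: mult_fst, simp (no_asm) add: algebra_simps)
  show "eventually (\<lambda>z. snd (mul w1 w2) z = L w1 z * snd w2 z + snd w1 z * P (T w2) z) (near \<Gamma>)"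
    using add2(1) pplus_eq_diff_pminus[OF analytic_B[OF w1]] pplus_eq_diff_pminus[OF analytic_B[OF w2]]
    by eventually_elim (simp only: mult_snd, simp (no_asm) add: algebra_simps)
qed

lemma T_mult_near:
  assumes w1: "analytic_pair w1" and w2: "analytic_pair w2"
  shows "eventually (\<lambda>z. P (T (mul w1 w2)) z = P (T w1) z * P (T w2) z) (near \<Gamma>)"
    "eventually (\<lambda>z. N (T (mul w1 w2)) z = - (N (T w1) z * N (T w2) z)) (near \<Gamma>)"
proof -
  note m = mult_eq_near[OF w1 w2]
  note add1 = pplus_pminus_add[OF analytic_A[OF w1] analytic_B[OF w1]]
  have "eventually (\<lambda>z. T (mul w1 w2) z = P (T w1) z * P (T w2) z + - (N (T w1) z * N (T w2) z)) (near \<Gamma>)"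
    using m add1 pplus_eq_diff_pminus[OF analytic_A[OF w1]] pplus_eq_diff_pminus[OF analytic_B[OF w1]]
      pplus_eq_diff_pminus[OF analytic_T[OF w2]]
    by eventually_elim (simp only:, simp (no_asm) add: algebra_simps)
  from decomposition_unique[OF analytic_T[OF analytic_pair_mult[OF w1 w2]]
      analytic_on_mult[OF analytic_on_pplus[OF analytic_T[OF w1]] analytic_on_pplus[OF analytic_T[OF w2]]]
      vanishes_outside_uminus[OF vanishes_outside_mult[OF vanishes_outside_pminus[OF analytic_T[OF w1]]
        vanishes_outside_pminus[OF analytic_T[OF w2]]]] this]
  show "eventually (\<lambda>z. P (T (mul w1 w2)) z = P (T w1) z * P (T w2) z) (near \<Gamma>)"
    "eventually (\<lambda>z. N (T (mul w1 w2)) z = - (N (T w1) z * N (T w2) z)) (near \<Gamma>)" .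
qed

lemma L_mult_near:
  assumes w1: "analytic_pair w1" and w2: "analytic_pair w2"
  shows "eventually (\<lambda>z. L (mul w1 w2) z = L w1 z * L w2 z) (near \<Gamma>)"
proof -
  have w12: "analytic_pair (mul w1 w2)" by (rule analytic_pair_mult[OF w1 w2])
  note analytic = w1 w2 analytic_deriv_a analytic_deriv_ah
  define X1 where "X1 = (\<lambda>z. N (B w1) z * P (A w2) z)"
  define X2 where "X2 = (\<lambda>z. P (A w1) z * N (B w2) z)"
  have X: "X1 analytic_on \<Gamma>" "X2 analytic_on \<Gamma>"
    unfolding X1_def X2_def using analytic
    by (intro analytic_on_mult analytic_on_circles_pplus analytic_on_circles_pminus; simp)+
  note m = mult_eq_near[OF w1 w2]
  note add2 = pplus_pminus_add[OF analytic_A[OF w2] analytic_B[OF w2]]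
  have eA: "eventually (\<lambda>z. A (mul w1 w2) z =
      (P (A w1) z * P (A w2) z - P X1 z - P X2 z) +
      (- N X1 z - N X2 z - N (B w1) z * N (A w2) z - N (A w1) z * N (A w2) z - N (A w1) z * N (B w2) z)) (near \<Gamma>)"
    using m(1) add2(2) pplus_eq_diff_pminus[OF analytic_A[OF w1]] pplus_eq_diff_pminus[OF analytic_A[OF w2]]
      pplus_eq_diff_pminus[OF X(1)] pplus_eq_diff_pminus[OF X(2)]
    by eventually_elim (simp only: X1_def X2_def, simp (no_asm) add: algebra_simps)
  have PA: "eventually (\<lambda>z. P (A (mul w1 w2)) z = P (A w1) z * P (A w2) z - P X1 z - P X2 z) (near \<Gamma>)"
    using analytic X analytic_A analytic_B
    by (intro decomposition_unique(1)[OF analytic_A[OF w12] _ _ eA] analytic_on_diff analytic_on_mult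
          analytic_on_pplus vanishes_outside_diff vanishes_outside_uminus vanishes_outside_mult
          vanishes_outside_pminus; simp)
  have eB: "eventually (\<lambda>z. B (mul w1 w2) z =
      (P (A w1) z * P (B w2) z + P (B w1) z * P (A w2) z + P (B w1) z * P (B w2) z + P X1 z + P X2 z) +
      (N X1 z + N X2 z - N (B w1) z * N (B w2) z)) (near \<Gamma>)"
    using m(2) add2(1) pplus_eq_diff_pminus[OF analytic_A[OF w1]] pplus_eq_diff_pminus[OF analytic_A[OF w2]]
      pplus_eq_diff_pminus[OF analytic_B[OF w1]] pplus_eq_diff_pminus[OF analytic_B[OF w2]]
      pplus_eq_diff_pminus[OF X(1)] pplus_eq_diff_pminus[OF X(2)]
    by eventually_elim (simp only: X1_def X2_def, simp (no_asm) add: algebra_simps)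
  have NB: "eventually (\<lambda>z. N (B (mul w1 w2)) z = N X1 z + N X2 z - N (B w1) z * N (B w2) z) (near \<Gamma>)"
    using analytic X analytic_A analytic_B
    by (intro decomposition_unique(2)[OF analytic_B[OF w12] _ _ eB] analytic_on_add analytic_on_mult
          analytic_on_pplus vanishes_outside_diff vanishes_outside_add vanishes_outside_mult
          vanishes_outside_pminus; simp)
  show ?thesis
    using PA NB pplus_eq_diff_pminus[OF X(1)] pplus_eq_diff_pminus[OF X(2)]
    by eventually_elim (simp only: X1_def X2_def, simp (no_asm) add: algebra_simps)
qed

lemma eta_cong_near:
  assumes w: "analytic_pair w" and w': "analytic_pair w'"
    and "eventually (\<lambda>z. fst w z = fst w' z \<and> snd w z = snd w' z) (near \<Gamma>)"
  shows "germ_eq c r m (eta c r m a ah w) (eta c r m a ah w')"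
proof -
  have "eventually (\<lambda>z. S w z = S w' z) (near \<Gamma>)" "eventually (\<lambda>z. T w z = T w' z) (near \<Gamma>)"
    using assms(3) by (auto elim: eventually_mono)
  note S = pplus_pminus_cong[OF analytic_S[OF w] analytic_S[OF w'] this(1)]
    and T = pplus_pminus_cong[OF analytic_T[OF w] analytic_T[OF w'] this(2)]
  show ?thesis
    unfolding germ_eq_iff_eventually using S T by eventually_elim (simp add: eta_fst eta_snd)
qed

lemma mult_commute_near:
  assumes w1: "analytic_pair w1" and w2: "analytic_pair w2"
  shows "eventually (\<lambda>z. fst (mul w1 w2) z = fst (mul w2 w1) z \<and> snd (mul w1 w2) z = snd (mul w2 w1) z) (near \<Gamma>)"
  using pplus_eq_diff_pminus[OF analytic_A[OF w1]] pplus_eq_diff_pminus[OF analytic_A[OF w2]]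
    pplus_eq_diff_pminus[OF analytic_B[OF w1]] pplus_eq_diff_pminus[OF analytic_B[OF w2]]
  by eventually_elim (simp only: mult_fst mult_snd, simp (no_asm) add: algebra_simps)

lemma mult_assoc_near:
  assumes w1: "analytic_pair w1" and w2: "analytic_pair w2" and w3: "analytic_pair w3"
  shows "eventually (\<lambda>z. fst (mul (mul w1 w2) w3) z = fst (mul w1 (mul w2 w3)) z \<and>
                        snd (mul (mul w1 w2) w3) z = snd (mul w1 (mul w2 w3)) z) (near \<Gamma>)"
proof -
  note m12_3 = mult_eq_near[OF analytic_pair_mult[OF w1 w2] w3]
    and m1_23 = mult_eq_near[OF w1 analytic_pair_mult[OF w2 w3]]
    and m12 = mult_eq_near[OF w1 w2] and m23 = mult_eq_near[OF w2 w3]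
    and T23 = T_mult_near[OF w2 w3]
  show ?thesis
    using m12_3 m1_23 m12 m23 T23 L_mult_near[OF w1 w2]
    by eventually_elim (simp only:, simp (no_asm) add: algebra_simps)
qed

lemma eta_mult_eq_0:
  assumes w1: "analytic_pair w1" and w2: "analytic_pair w2"
    and ker: "germ_eq c r m (eta c r m a ah w2) (\<lambda>_. 0, \<lambda>_. 0)"
  shows "germ_eq c r m (eta c r m a ah (mul w1 w2)) (\<lambda>_. 0, \<lambda>_. 0)"
proof -
  have ker_N: "eventually (\<lambda>z. N (T w2) z = deriv a z * N (S w2) z) (near \<Gamma>)"
    and ker_P: "eventually (\<lambda>z. P (T w2) z = deriv ah z * P (S w2) z) (near \<Gamma>)"
    using ker unfolding germ_eq_iff_eventually by (auto elim!: eventually_mono simp: eta_fst eta_snd)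
  note m = mult_eq_near[OF w1 w2]
  note add1 = pplus_pminus_add[OF analytic_A[OF w1] analytic_B[OF w1]]
  have "eventually (\<lambda>z. S (mul w1 w2) z = P (S w2) z * P (T w1) z + - (N (S w2) z * N (T w1) z)) (near \<Gamma>)"
    using m ker_N ker_P pplus_eq_diff_pminus[OF analytic_S[OF w2]] pplus_eq_diff_pminus[OF analytic_A[OF w1]]
      pplus_eq_diff_pminus[OF analytic_B[OF w1]] add1
    by eventually_elim (simp only:, simp (no_asm) add: algebra_simps)
  from decomposition_unique[OF analytic_S[OF analytic_pair_mult[OF w1 w2]]
      analytic_on_mult[OF analytic_on_pplus[OF analytic_S[OF w2]] analytic_on_pplus[OF analytic_T[OF w1]]]
      vanishes_outside_uminus[OF vanishes_outside_mult[OF vanishes_outside_pminus[OF analytic_S[OF w2]]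
        vanishes_outside_pminus[OF analytic_T[OF w1]]]] this]
  have "eventually (\<lambda>z. P (S (mul w1 w2)) z = P (S w2) z * P (T w1) z) (near \<Gamma>)"
    "eventually (\<lambda>z. N (S (mul w1 w2)) z = - (N (S w2) z * N (T w1) z)) (near \<Gamma>)" .
  then show ?thesis
    unfolding germ_eq_iff_eventually
    using T_mult_near[OF w1 w2] ker_N ker_P
    by eventually_elim (simp only: eta_fst eta_snd fst_conv snd_conv, simp (no_asm) add: algebra_simps)
qed

end

lemma (in disjoint_circles) analytic_deriv_if_in_M:
  assumes "in_M c r m n d \<phi> a ah"
  shows "deriv a analytic_on \<Gamma>" "deriv ah analytic_on \<Gamma>"
proof -
  obtain U where U: "open U" "- Di \<subseteq> U" "a holomorphic_on U"
    using assms unfolding in_M_def by blast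
  then have "deriv a analytic_on U"
    by (simp add: analytic_on_open holomorphic_deriv)
  then show "deriv a analytic_on \<Gamma>"
    using U(2) circles_Int_Di analytic_on_subset by blast
  obtain V where V: "open V" "Dc \<subseteq> V" "ah holomorphic_on V - \<phi> ` {1..m}"
    and poles: "\<And>j. j \<in> {1..m} \<Longrightarrow> \<phi> j \<in> ball (c j) (r j)"
    using assms unfolding in_M_def by blast
  have "open (V - \<phi> ` {1..m})"
    using V(1) by (intro open_Diff finite_imp_closed) auto
  then have "deriv ah analytic_on V - \<phi> ` {1..m}"
    using V(3) by (simp add: analytic_on_open holomorphic_deriv)
  moreover have "\<phi> ` {1..m} \<subseteq> Di"
    using poles by (auto simp: disks_int_def)
  then have "\<Gamma> \<subseteq> V - \<phi> ` {1..m}"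
    using V(2) Dc_eq_Di_Un_circles circles_Int_Di by blast
  ultimately show "deriv ah analytic_on \<Gamma>"
    using analytic_on_subset by blast
qed

theorem lemma2p6:
  fixes m :: nat and n :: "nat \<Rightarrow> nat" and d :: "nat \<Rightarrow> int"
    and c :: "nat \<Rightarrow> complex" and r :: "nat \<Rightarrow> real" and \<phi> :: "nat \<Rightarrow> complex"
    and a ah :: "complex \<Rightarrow> complex"
  assumes "m \<ge> 1"
    and "\<forall>i\<in>{0..m}. n i > 0"
    and "\<forall>i\<in>{1..m}. d i \<noteq> 0"
    and "\<forall>i\<in>{1..m}. r i > 0"
    and "\<forall>i\<in>{1..m}. \<forall>j\<in>{1..m}. i \<noteq> j \<longrightarrow> cball (c i) (r i) \<inter> cball (c j) (r j) = {}"
    and "in_M c r m n d \<phi> a ah"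
  shows
    "(\<forall>w1 w2. holo_near c r m (fst w1) \<and> holo_near c r m (snd w1) \<and>
        holo_near c r m (fst w2) \<and> holo_near c r m (snd w2) \<and>
        germ_eq c r m (eta c r m a ah w2) (\<lambda>_. 0, \<lambda>_. 0) \<longrightarrow>
        germ_eq c r m (eta c r m a ah (mult c r m a ah w1 w2)) (\<lambda>_. 0, \<lambda>_. 0))
   \<and> (\<forall>w1 w2. holo_near c r m (fst w1) \<and> holo_near c r m (snd w1) \<and>
        holo_near c r m (fst w2) \<and> holo_near c r m (snd w2) \<longrightarrow>
        germ_eq c r m (eta c r m a ah (mult c r m a ah w1 w2))
                      (eta c r m a ah (mult c r m a ah w2 w1)))
   \<and> (\<forall>w1 w2 w3. holo_near c r m (fst w1) \<and> holo_near c r m (snd w1) \<and>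
        holo_near c r m (fst w2) \<and> holo_near c r m (snd w2) \<and>
        holo_near c r m (fst w3) \<and> holo_near c r m (snd w3) \<longrightarrow>
        germ_eq c r m (eta c r m a ah (mult c r m a ah (mult c r m a ah w1 w2) w3))
                      (eta c r m a ah (mult c r m a ah w1 (mult c r m a ah w2 w3))))"
proof -
  interpret disjoint_circles c r m
    using assms(4,5) by unfold_locales auto
  interpret germ_product c r m a ah
    using analytic_deriv_if_in_M[OF assms(6)] by unfold_locales
  have commute: "germ_eq c r m (eta c r m a ah (mul w1 w2)) (eta c r m a ah (mul w2 w1))"
    if "analytic_pair w1" "analytic_pair w2" for w1 w2
    using that by (intro eta_cong_near analytic_pair_mult mult_commute_near)
  have assoc: "germ_eq c r m (eta c r m a ah (mul (mul w1 w2) w3)) (eta c r m a ah (mul w1 (mul w2 w3)))"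
    if "analytic_pair w1" "analytic_pair w2" "analytic_pair w3" for w1 w2 w3
    using that by (intro eta_cong_near analytic_pair_mult mult_assoc_near)
  show ?thesis
    unfolding holo_near_iff_analytic_on using eta_mult_eq_0 commute assoc by blast
qed

end
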